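(* Let $R$ be a supertropical semiring such that $eR$ is a semifield with $\mathcal G\neq\{e\}$, let $(q,b)$ be a quadratic pair on an $R$-module $V$, and let $x,y\in V\setminus\{0\}$. Suppose either that $(x,y)$ is weakly CS, or that $(x,y)$ is almost CS and both $q(x)$ and $q(y)$ lie in $eR$. Then $q(\lambda x+\mu y)=q(\lambda x)+q(\mu y)$ for all $\lambda,\mu\in R$ (equivalently, $q$ is additive on $Rx+Ry$).
   Context: All semirings are commutative with $1$. A semiring $R$ is supertropical if $e:=1+1$ satisfies $e+e=e$ and, for all $x,y\in R$: if $ex\neq ey$ then $x+y\in\{x,y\}$, and if $ex=ey$ then $x+y=ey$. $eR$ is totally ordered by $u\le v\iff u+v=v$; write $x\le_\nu y$, $x\cong_\nu y$, $x<_\nu y$ for $ex\le ey$, $ex=ey$, $ex<ey$. $\mathcal G=eR\setminus\{0\}$; "$eR$ is a semifield" means every element of $\mathcal G$ is invertible in the semiring $eR$ (whose unit is $e$). A quadratic form on an $R$-module $V$ is a map $q:V\to R$ with $q(ax)=a^2q(x)$ such that some symmetric bilinear $b$ satisfies $q(x+y)=q(x)+q(y)+b(x,y)$; $(q,b)$ is then a quadratic pair. A pair $(x,y)$ of nonzero vectors is weakly CS if $b(x,y)^2\le_\nu q(x)q(y)$, and almost CS if $b(x,y)^2\le_\nu c\,q(x)q(y)$ for every $c\in\mathcal G$ with $c>e$. *)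

theory Defs
  imports Main
begin

definition ee :: "'a::comm_semiring_1" where
  "ee = 1 + 1"

definition supertropical :: "'a::comm_semiring_1 itself \<Rightarrow> bool" where
  "supertropical _ \<longleftrightarrow>
     (ee + ee = (ee::'a)) \<and>
     (\<forall>x y::'a. (ee * x \<noteq> ee * y \<longrightarrow> x + y \<in> {x, y}) \<and>
                 (ee * x = ee * y \<longrightarrow> x + y = ee * y))"

definition ghost_ideal :: "'a::comm_semiring_1 set" where
  "ghost_ideal = range (\<lambda>x. ee * x)"

definition ghostG :: "'a::comm_semiring_1 set" where
  "ghostG = ghost_ideal - {0}"

definition e_le :: "'a::comm_semiring_1 \<Rightarrow> 'a \<Rightarrow> bool" where
  "e_le u v \<longleftrightarrow> u + v = v"

definition e_less :: "'a::comm_semiring_1 \<Rightarrow> 'a \<Rightarrow> bool" where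
  "e_less u v \<longleftrightarrow> e_le u v \<and> u \<noteq> v"

definition nu_le :: "'a::comm_semiring_1 \<Rightarrow> 'a \<Rightarrow> bool" where
  "nu_le x y \<longleftrightarrow> e_le (ee * x) (ee * y)"

definition eR_semifield :: "'a::comm_semiring_1 itself \<Rightarrow> bool" where
  "eR_semifield _ \<longleftrightarrow>
     (\<forall>g\<in>(ghostG::'a set). \<exists>h\<in>ghost_ideal. g * h = ee)"

definition semimodule :: "('a::comm_semiring_1 \<Rightarrow> 'v::comm_monoid_add \<Rightarrow> 'v) \<Rightarrow> bool" where
  "semimodule smul \<longleftrightarrow>
     (\<forall>a x y. smul a (x + y) = smul a x + smul a y) \<and>
     (\<forall>a b x. smul (a + b) x = smul a x + smul b x) \<and>
     (\<forall>a b x. smul (a * b) x = smul a (smul b x)) \<and>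
     (\<forall>x. smul 1 x = x) \<and>
     (\<forall>x. smul 0 x = 0) \<and>
     (\<forall>a. smul a 0 = 0)"

definition symmetric_bilinear ::
  "('a::comm_semiring_1 \<Rightarrow> 'v::comm_monoid_add \<Rightarrow> 'v) \<Rightarrow> ('v \<Rightarrow> 'v \<Rightarrow> 'a) \<Rightarrow> bool" where
  "symmetric_bilinear smul b \<longleftrightarrow>
     (\<forall>x y. b x y = b y x) \<and>
     (\<forall>x y z. b (x + y) z = b x z + b y z) \<and>
     (\<forall>a x y. b (smul a x) y = a * b x y)"

definition quadratic_pair ::
  "('a::comm_semiring_1 \<Rightarrow> 'v::comm_monoid_add \<Rightarrow> 'v) \<Rightarrow> ('v \<Rightarrow> 'a) \<Rightarrow> ('v \<Rightarrow> 'v \<Rightarrow> 'a) \<Rightarrow> bool" where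
  "quadratic_pair smul q b \<longleftrightarrow>
     (\<forall>a x. q (smul a x) = a^2 * q x) \<and>
     symmetric_bilinear smul b \<and>
     (\<forall>x y. q (x + y) = q x + q y + b x y)"

definition weakly_CS :: "('v::comm_monoid_add \<Rightarrow> 'a::comm_semiring_1) \<Rightarrow> ('v \<Rightarrow> 'v \<Rightarrow> 'a) \<Rightarrow> 'v \<Rightarrow> 'v \<Rightarrow> bool" where
  "weakly_CS q b x y \<longleftrightarrow> x \<noteq> 0 \<and> y \<noteq> 0 \<and> nu_le ((b x y)^2) (q x * q y)"

definition almost_CS :: "('v::comm_monoid_add \<Rightarrow> 'a::comm_semiring_1) \<Rightarrow> ('v \<Rightarrow> 'v \<Rightarrow> 'a) \<Rightarrow> 'v \<Rightarrow> 'v \<Rightarrow> bool" where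
  "almost_CS q b x y \<longleftrightarrow> x \<noteq> 0 \<and> y \<noteq> 0 \<and>
     (\<forall>c\<in>ghostG. e_less ee c \<longrightarrow> nu_le ((b x y)^2) (c * (q x * q y)))"

end

theory Submission
  imports Defs
begin

text \<open>Put a = q(\<lambda>x), b = q(\<mu>y) and g = b(\<lambda>x, \<mu>y), so that q(\<lambda>x + \<mu>y) = a + b + g.
  Supertropical addition absorbs g into s = a + b as soon as g is \<nu>-below s, provided s is
  ghost in the case of \<nu>-equality. Since eR is a totally ordered semifield, s is the \<nu>-maximum
  of a and b. Under the weak CS condition g^2 \<le>_\<nu> ab \<le>_\<nu> s^2, so g \<le>_\<nu> s after cancelling;
  if g \<cong>_\<nu> s then s^2 \<le>_\<nu> ab forces a \<cong>_\<nu> b, whence s = eb is ghost. Under the almost CS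
  condition, g >_\<nu> s would make c = g/s >_\<nu> e an admissible constant with g^2 \<le>_\<nu> c s^2 = g s,
  a contradiction; here s is ghost because a and b are.\<close>

lemma e_le_trans: "e_le u v \<Longrightarrow> e_le v w \<Longrightarrow> e_le (u::'a::comm_semiring_1) w"
  unfolding e_le_def by (metis add.assoc)

lemma e_le_antisym: "e_le u v \<Longrightarrow> e_le v u \<Longrightarrow> (u::'a::comm_semiring_1) = v"
  unfolding e_le_def by (metis add.commute)

lemma e_le_mult_left: "e_le u v \<Longrightarrow> e_le (w * u) (w * (v::'a::comm_semiring_1))"
  unfolding e_le_def by (metis distrib_left)

lemma e_le_zero_iff: "e_le u 0 \<longleftrightarrow> (u::'a::comm_semiring_1) = 0"
  unfolding e_le_def by simp

lemma zero_e_le: "e_le 0 (u::'a::comm_semiring_1)"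
  unfolding e_le_def by simp

lemma add_self_eq_ee_mult: "(x::'a::comm_semiring_1) + x = ee * x"
  unfolding ee_def by (metis distrib_right mult_1)

lemma nu_le_trans: "nu_le u v \<Longrightarrow> nu_le v w \<Longrightarrow> nu_le (u::'a::comm_semiring_1) w"
  unfolding nu_le_def by (rule e_le_trans)

lemma nu_le_mult_left: "nu_le u v \<Longrightarrow> nu_le (w * u) (w * (v::'a::comm_semiring_1))"
  unfolding nu_le_def using e_le_mult_left[of "ee * u" "ee * v" w] by (simp add: mult.left_commute)

lemma nu_le_mult_mono: "nu_le a c \<Longrightarrow> nu_le b d \<Longrightarrow> nu_le (a * b) (c * (d::'a::comm_semiring_1))"
  by (metis mult.commute nu_le_mult_left nu_le_trans)

lemma nu_le_square_scale:
  assumes "nu_le (g\<^sup>2) (c * (a * b))"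
  shows "nu_le (((lam * mu) * g)\<^sup>2) (c * ((lam\<^sup>2 * a) * (mu\<^sup>2 * (b::'a::comm_semiring_1))))"
proof -
  have "((lam * mu) * g)\<^sup>2 = (lam * mu)\<^sup>2 * g\<^sup>2"
    and "c * ((lam\<^sup>2 * a) * (mu\<^sup>2 * b)) = (lam * mu)\<^sup>2 * (c * (a * b))"
    by (simp_all add: algebra_simps)
  with nu_le_mult_left[OF assms] show ?thesis by simp
qed

text \<open>Elements of eR are handled as the fixed points ee * u = u.\<close>

context
  assumes supertropical: "supertropical TYPE('a::comm_semiring_1)"
begin

lemma ee_mult_ee: "(ee::'a) * ee = ee"
  using supertropical by (simp add: supertropical_def distrib_left flip: add_self_eq_ee_mult)

lemma ee_mult_ee_mult [simp]: "ee * (ee * (x::'a)) = ee * x"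
  by (simp add: mult.assoc[symmetric] ee_mult_ee)

lemma supertropical_add_cases: "ee * (x::'a) \<noteq> ee * y \<Longrightarrow> x + y = x \<or> x + y = y"
  using supertropical by (auto simp: supertropical_def)

lemma supertropical_add_nu_eq: "ee * (x::'a) = ee * y \<Longrightarrow> x + y = ee * y"
  using supertropical by (auto simp: supertropical_def)

lemma trivial_if_ee_eq_zero: "ee = (0::'a) \<Longrightarrow> (x::'a) = 0"
  using supertropical_add_nu_eq[of x 0] by simp

lemma ee_mult_mult: "ee * ((u::'a) * v) = (ee * u) * (ee * v)"
  by (simp add: algebra_simps ee_mult_ee)

lemma ee_mult_power2: "ee * (u::'a)\<^sup>2 = (ee * u) * (ee * u)"
  by (simp add: power2_eq_square ee_mult_mult)

lemma mem_ghost_ideal_iff: "(u::'a) \<in> ghost_ideal \<longleftrightarrow> ee * u = u"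
  unfolding ghost_ideal_def by (auto intro: sym)

lemma mem_ghostG_iff: "(c::'a) \<in> ghostG \<longleftrightarrow> ee * c = c \<and> c \<noteq> 0"
  unfolding ghostG_def by (simp add: mem_ghost_ideal_iff)

lemma ghost_e_le_total: "ee * (u::'a) = u \<Longrightarrow> ee * v = v \<Longrightarrow> e_le u v \<or> e_le v u"
  unfolding e_le_def
  by (metis add.commute add_self_eq_ee_mult supertropical_add_cases)

lemma nu_le_add_left: "nu_le (a::'a) (a + b)"
  unfolding nu_le_def e_le_def
  by (simp add: distrib_left add.assoc[symmetric] add_self_eq_ee_mult)

lemma nu_le_add_right: "nu_le (b::'a) (a + b)"
  using nu_le_add_left[of b a] by (simp add: add.commute)

lemma add_absorb_of_nu_le:
  assumes le: "nu_le g (s::'a)" and ghost: "ee * g = ee * s \<Longrightarrow> ee * s = s"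
  shows "s + g = s"
proof (cases "ee * g = ee * s")
  case True
  then show ?thesis using supertropical_add_nu_eq[of s g] ghost by simp
next
  case False
  from le have "ee * s + ee * g = ee * s"
    unfolding nu_le_def e_le_def by (simp add: add.commute)
  then have "s + g \<noteq> g" using False by (metis distrib_left)
  with False show ?thesis using supertropical_add_cases[of s g] by metis
qed

context
  assumes semifield: "eR_semifield TYPE('a)"
begin

lemma ghost_inverse:
  assumes "ee * (u::'a) = u" and "u \<noteq> 0"
  obtains h where "ee * h = h" and "u * h = ee"
proof -
  have "u \<in> ghostG" using assms mem_ghostG_iff by blast
  with semifield obtain h where "h \<in> ghost_ideal" "u * h = ee"
    unfolding eR_semifield_def by blast
  then show ?thesis using that mem_ghost_ideal_iff by blast
qed

lemma ghost_e_le_cancel: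
  assumes u: "ee * (u::'a) = u" "u \<noteq> 0" and v: "ee * v = v" and w: "ee * w = w"
    and le: "e_le (u * v) (u * w)"
  shows "e_le v w"
proof -
  obtain h where h: "ee * h = h" "u * h = ee" using ghost_inverse[OF u] .
  have "e_le ((u * h) * v) ((u * h) * w)"
    using e_le_mult_left[OF le, of h] by (simp add: algebra_simps)
  then show ?thesis using h v w by simp
qed

lemma ghost_square_eq_zero:
  assumes g: "ee * (g::'a) = g" and "g * g = 0"
  shows "g = 0"
proof (rule ccontr)
  assume "g \<noteq> 0"
  then obtain h where "g * h = ee" using ghost_inverse[OF g] by blast
  have "(g * g) * h = g * (g * h)" by (rule mult.assoc)
  also have "\<dots> = ee * g" using \<open>g * h = ee\<close> by (simp add: mult.commute)
  finally have "(g * g) * h = g" using g by simp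
  with \<open>g * g = 0\<close> \<open>g \<noteq> 0\<close> show False by simp
qed

lemma ghost_e_le_of_square_le:
  assumes g: "ee * (g::'a) = g" and m: "ee * m = m" and le: "e_le (g * g) (m * m)"
  shows "e_le g m"
proof (cases "m = 0")
  case True
  then have "g = 0" using le ghost_square_eq_zero[OF g] by (simp add: e_le_zero_iff)
  then show ?thesis by (simp add: zero_e_le)
next
  case False
  show ?thesis
  proof (rule ccontr)
    assume "\<not> e_le g m"
    then have "e_le m g" using ghost_e_le_total[OF g m] by blast
    then have "e_le (m * g) (g * g)" using e_le_mult_left[of m g g] by (simp add: mult.commute)
    then have "e_le (m * g) (m * m)" using le e_le_trans by blast
    then show False using ghost_e_le_cancel[OF m False g m] \<open>\<not> e_le g m\<close> by blast
  qed
qed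

lemma ghost_e_le_of_square_le_mult:
  assumes a: "ee * (a::'a) = a" and m: "ee * m = m"
    and bm: "e_le b m" and le: "e_le (m * m) (a * b)"
  shows "e_le m a"
proof (cases "m = 0")
  case True
  then show ?thesis by (simp add: zero_e_le)
next
  case False
  have "e_le (a * b) (m * a)" using e_le_mult_left[OF bm, of a] by (simp add: mult.commute)
  then show ?thesis using ghost_e_le_cancel[OF m False m a] le e_le_trans by blast
qed

lemma exists_ghostG_above_ee:
  assumes "ee \<noteq> (0::'a)" and "(ghostG::'a set) \<noteq> {ee}"
  obtains c :: 'a where "c \<in> ghostG" and "e_less ee c"
proof -
  have "ee \<in> (ghostG::'a set)" using assms(1) mem_ghostG_iff ee_mult_ee by blast
  then obtain g :: 'a where g: "ee * g = g" "g \<noteq> 0" "g \<noteq> ee"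
    using assms(2) mem_ghostG_iff by blast
  obtain h where h: "ee * h = h" "g * h = ee" using ghost_inverse[OF g(1,2)] .
  have "h \<noteq> 0" "h \<noteq> ee" using h g assms(1) by (auto simp: mult.commute)
  consider "e_le ee g" | "e_le g ee" using ghost_e_le_total[OF ee_mult_ee g(1)] by blast
  then show ?thesis
  proof cases
    case 1
    then show ?thesis using that g mem_ghostG_iff unfolding e_less_def by metis
  next
    case 2
    have "e_le ee h"
      using e_le_mult_left[OF 2, of h] h g by (simp add: mult.commute)
    then show ?thesis
      using that h \<open>h \<noteq> 0\<close> \<open>h \<noteq> ee\<close> mem_ghostG_iff unfolding e_less_def by metis
  qed
qed

lemma ghost_e_le_of_square_le_almost:
  assumes g: "ee * (g::'a) = g" and m: "ee * m = m"
    and nontrivial: "(ghostG::'a set) \<noteq> {ee}"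
    and le: "\<And>c. c \<in> ghostG \<Longrightarrow> e_less ee c \<Longrightarrow> e_le (g * g) (c * (m * m))"
  shows "e_le g m"
proof (rule ccontr)
  assume not_le: "\<not> e_le g m"
  then have mg: "e_le m g" using ghost_e_le_total[OF g m] by blast
  have "m \<noteq> g" using not_le m add_self_eq_ee_mult[of m] unfolding e_le_def by auto
  have "ee \<noteq> (0::'a)"
  proof
    assume "ee = (0::'a)"
    then have "g = 0" by (rule trivial_if_ee_eq_zero)
    with not_le show False by (simp add: zero_e_le)
  qed
  show False
  proof (cases "m = 0")
    case True
    obtain c :: 'a where "c \<in> ghostG" "e_less ee c"
      using exists_ghostG_above_ee[OF \<open>ee \<noteq> 0\<close> nontrivial] by blast
    then have "g * g = 0" using le True by (simp add: e_le_zero_iff)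
    then show False using not_le ghost_square_eq_zero[OF g] by (simp add: zero_e_le)
  next
    case False
    obtain k where k: "ee * k = k" "m * k = ee" using ghost_inverse[OF m False] .
    \<comment> \<open>the witness c = g/m\<close>
    define c where "c = g * k"
    have cm: "c * m = g"
      unfolding c_def using k g by (simp add: mult.assoc mult.commute[of k] mult.commute[of g ee])
    have "e_le ee c"
      using e_le_mult_left[OF mg, of k] k unfolding c_def by (simp add: mult.commute)
    moreover have "c \<noteq> ee" using cm m \<open>m \<noteq> g\<close> by auto
    moreover have "g \<noteq> 0" using not_le zero_e_le by blast
    then have "c \<noteq> 0" using cm by auto
    moreover have "ee * c = c" unfolding c_def using g by (simp add: mult.assoc[symmetric])
    ultimately have "e_le (g * g) ((c * m) * m)"
      using le[of c] mem_ghostG_iff unfolding e_less_def by (simp add: mult.assoc)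
    then have "e_le g m" using ghost_e_le_cancel[OF g \<open>g \<noteq> 0\<close> g m] cm by simp
    then show False using not_le by blast
  qed
qed

lemma add_absorb_of_weakly_CS:
  assumes "nu_le (g\<^sup>2) ((a::'a) * b)"
  shows "(a + b) + g = a + b"
proof (rule add_absorb_of_nu_le)
  let ?s = "a + b"
  have ab: "nu_le (a * b) (?s\<^sup>2)"
    using nu_le_mult_mono[OF nu_le_add_left nu_le_add_right] by (simp add: power2_eq_square)
  have "nu_le (g\<^sup>2) (?s\<^sup>2)" using nu_le_trans[OF assms ab] .
  then show "nu_le g ?s"
    using ghost_e_le_of_square_le unfolding nu_le_def by (simp add: ee_mult_power2)
  assume eq: "ee * g = ee * ?s"
  have sq: "e_le ((ee * ?s) * (ee * ?s)) ((ee * a) * (ee * b))"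
    using assms eq unfolding nu_le_def by (simp only: ee_mult_power2 ee_mult_mult[of a b])
  have "e_le (ee * ?s) (ee * a)"
    using ghost_e_le_of_square_le_mult[OF _ _ _ sq] nu_le_add_right unfolding nu_le_def by simp
  moreover have "e_le (ee * ?s) (ee * b)"
    using ghost_e_le_of_square_le_mult[OF _ _ _ sq[unfolded mult.commute[of "ee * a"]]]
      nu_le_add_left unfolding nu_le_def by simp
  ultimately have "ee * a = ee * b"
    using e_le_antisym nu_le_add_left nu_le_add_right unfolding nu_le_def by metis
  then show "ee * ?s = ?s" using supertropical_add_nu_eq by simp
qed

lemma add_absorb_of_almost_CS:
  assumes nontrivial: "(ghostG::'a set) \<noteq> {ee}"
    and le: "\<forall>c\<in>ghostG. e_less ee c \<longrightarrow> nu_le (g\<^sup>2) (c * ((a::'a) * b))"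
    and a: "ee * a = a" and b: "ee * b = b"
  shows "(a + b) + g = a + b"
proof (rule add_absorb_of_nu_le)
  let ?s = "a + b"
  have ab: "nu_le (a * b) (?s * ?s)"
    using nu_le_mult_mono[OF nu_le_add_left nu_le_add_right] .
  have "e_le ((ee * g) * (ee * g)) (c * ((ee * ?s) * (ee * ?s)))"
    if c: "c \<in> ghostG" "e_less ee c" for c
  proof -
    have "nu_le (g\<^sup>2) (c * (?s * ?s))"
      using nu_le_trans[OF le[rule_format, OF c] nu_le_mult_left[OF ab]] .
    moreover have "ee * c = c" using c mem_ghostG_iff by blast
    ultimately show ?thesis
      unfolding nu_le_def
      by (simp only: ee_mult_power2 mult.left_commute[of ee c] ee_mult_mult[of ?s ?s])
  qed
  from ghost_e_le_of_square_le_almost[OF ee_mult_ee_mult ee_mult_ee_mult nontrivial this]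
  show "nu_le g ?s" unfolding nu_le_def .
  show "ee * ?s = ?s" using a b by (simp add: distrib_left)
qed

end

end

lemma quadratic_pair_scaled_sum:
  assumes "quadratic_pair smul q b"
  shows "q (smul lam x + smul mu y) = lam\<^sup>2 * q x + mu\<^sup>2 * q y + (lam * mu) * b x y"
    and "q (smul lam x) = lam\<^sup>2 * q x"
proof -
  from assms have "b (smul lam x) (smul mu y) = (lam * mu) * b x y"
    unfolding quadratic_pair_def symmetric_bilinear_def by (metis mult.assoc)
  with assms show "q (smul lam x + smul mu y) = lam\<^sup>2 * q x + mu\<^sup>2 * q y + (lam * mu) * b x y"
    unfolding quadratic_pair_def by simp
  from assms show "q (smul lam x) = lam\<^sup>2 * q x"
    unfolding quadratic_pair_def by simp
qed

theorem theorem1p12: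
  fixes smul :: "'a::comm_semiring_1 \<Rightarrow> 'v::comm_monoid_add \<Rightarrow> 'v"
    and q :: "'v \<Rightarrow> 'a" and b :: "'v \<Rightarrow> 'v \<Rightarrow> 'a" and x y :: 'v
  assumes "supertropical TYPE('a)"
    and "eR_semifield TYPE('a)"
    and "(ghostG :: 'a set) \<noteq> {ee}"
    and "semimodule smul"
    and "quadratic_pair smul q b"
    and "x \<noteq> 0" and "y \<noteq> 0"
    and "weakly_CS q b x y \<or>
         (almost_CS q b x y \<and> q x \<in> ghost_ideal \<and> q y \<in> ghost_ideal)"
  shows "\<forall>lam mu. q (smul lam x + smul mu y) = q (smul lam x) + q (smul mu y)"
proof (intro allI)
  \<comment> \<open>only the quadratic-pair identities are used, not the module axioms\<close>
  fix lam mu :: 'a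
  let ?a = "lam\<^sup>2 * q x" and ?b = "mu\<^sup>2 * q y" and ?g = "(lam * mu) * b x y"
  from assms(8) have "(?a + ?b) + ?g = ?a + ?b"
  proof
    assume "weakly_CS q b x y"
    then have "nu_le ((b x y)\<^sup>2) (1 * (q x * q y))" unfolding weakly_CS_def by simp
    from nu_le_square_scale[OF this, of lam mu] show ?thesis
      using add_absorb_of_weakly_CS[OF assms(1,2)] by simp
  next
    assume almost: "almost_CS q b x y \<and> q x \<in> ghost_ideal \<and> q y \<in> ghost_ideal"
    then have "ee * ?a = ?a" "ee * ?b = ?b"
      using mem_ghost_ideal_iff[OF assms(1)] by (metis mult.left_commute)+
    moreover have "\<forall>c\<in>ghostG. e_less ee c \<longrightarrow> nu_le (?g\<^sup>2) (c * (?a * ?b))"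
      using almost nu_le_square_scale unfolding almost_CS_def by blast
    ultimately show ?thesis using add_absorb_of_almost_CS[OF assms(1-3)] by blast
  qed
  then show "q (smul lam x + smul mu y) = q (smul lam x) + q (smul mu y)"
    using quadratic_pair_scaled_sum[OF assms(5)] by simp
qed

end
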